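(* Let $h\colon\{0,1\}^k\to\{0,1\}$ be a partial function, and for each $z\in\{0,1\}$ let $\mathcal D_z$ be a probability distribution over $h^{-1}(z)$. Then for every $\varepsilon\in[0,1]$ there exist a conjunction $C\colon\{0,1\}^k\to\{0,1\}$ of width $\mathsf{PostBPP}_\varepsilon(h)$ and a $z\in\{0,1\}$ such that $\varepsilon\cdot C(\mathcal D_z)\ge(1-\varepsilon)\cdot C(\mathcal D_{1-z})$ and $C(\mathcal D_z)>0$.
   Context: A conjunction is an AND of literals (variables or negated variables); its width is its number of literals. For a conjunction $C$ and distribution $\mathcal D$, $C(\mathcal D)=\Pr_{x\sim\mathcal D}[C(x)=1]$. A randomized decision tree is a probability distribution over deterministic decision trees; its cost is the maximum depth of a tree in its support. $\mathsf{PostBPP}_\varepsilon(h)$ is the minimum cost of a randomized decision tree with leaves labeled in $\{0,1,\bot\}$ such that on every $x$ in the domain of $h$, the probability of outputting $\bot$ is $<1$ and, conditioned on not outputting $\bot$, the output equals $h(x)$ with probability $\ge 1-\varepsilon$. *)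

theory Defs
  imports "HOL-Probability.Probability"
begin

text \<open>Inputs in {0,1}^k are boolean lists of length k. A partial function
  h : {0,1}^k -> {0,1} is a map bool list => bool option whose domain consists of
  lists of length k.\<close>

definition partial_boolfun :: "nat \<Rightarrow> (bool list \<Rightarrow> bool option) \<Rightarrow> bool" where
  "partial_boolfun k h \<longleftrightarrow> (\<forall>x. h x \<noteq> None \<longrightarrow> length x = k)"

text \<open>Leaves are labelled by Some b (output b) or None (output bottom).\<close>

datatype dtree = Leaf "bool option" | Node nat dtree dtree

fun depth :: "dtree \<Rightarrow> nat" where
  "depth (Leaf _) = 0"
| "depth (Node _ l r) = Suc (max (depth l) (depth r))"

fun valid_tree :: "nat \<Rightarrow> dtree \<Rightarrow> bool" where
  "valid_tree k (Leaf _) = True"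
| "valid_tree k (Node i l r) = (i < k \<and> valid_tree k l \<and> valid_tree k r)"

fun eval_tree :: "dtree \<Rightarrow> bool list \<Rightarrow> bool option" where
  "eval_tree (Leaf v) x = v"
| "eval_tree (Node i l r) x = (if x ! i then eval_tree r x else eval_tree l x)"

definition rdt_cost_le :: "nat \<Rightarrow> nat \<Rightarrow> dtree pmf \<Rightarrow> bool" where
  "rdt_cost_le k d R \<longleftrightarrow> (\<forall>T\<in>set_pmf R. valid_tree k T \<and> depth T \<le> d)"

definition postbpp_correct :: "real \<Rightarrow> (bool list \<Rightarrow> bool option) \<Rightarrow> dtree pmf \<Rightarrow> bool" where
  "postbpp_correct \<epsilon> h R \<longleftrightarrow>
     (\<forall>x b. h x = Some b \<longrightarrow>
        measure_pmf.prob R {T. eval_tree T x = None} < 1 \<and>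
        measure_pmf.prob R {T. eval_tree T x = Some b}
          / measure_pmf.prob R {T. eval_tree T x \<noteq> None} \<ge> 1 - \<epsilon>)"

definition PostBPP :: "nat \<Rightarrow> real \<Rightarrow> (bool list \<Rightarrow> bool option) \<Rightarrow> nat" where
  "PostBPP k \<epsilon> h = (LEAST d. \<exists>R. rdt_cost_le k d R \<and> postbpp_correct \<epsilon> h R)"

definition is_conjunction :: "nat \<Rightarrow> (nat \<times> bool) set \<Rightarrow> bool" where
  "is_conjunction k L \<longleftrightarrow> L \<subseteq> {..<k} \<times> UNIV"

definition conj_eval :: "(nat \<times> bool) set \<Rightarrow> bool list \<Rightarrow> bool" where
  "conj_eval L x \<longleftrightarrow> (\<forall>(i, b)\<in>L. x ! i = b)"

definition width :: "(nat \<times> bool) set \<Rightarrow> nat" where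
  "width L = card L"

definition conj_prob :: "(nat \<times> bool) set \<Rightarrow> bool list pmf \<Rightarrow> real" where
  "conj_prob L D = measure_pmf.prob D {x. conj_eval L x}"

end

theory Submission
  imports Defs
begin

text \<open>
  Fix an optimal postselecting randomized decision tree R of cost d. Score an answer on an input of
  class z by \<open>\<epsilon>\<close> if it is z, by \<open>-(1 - \<epsilon>)\<close> if it is \<open>\<not> z\<close> and by 0 if it is \<open>\<bottom>\<close>: postselected
  correctness says exactly that the expected score of R is nonnegative on every input of h.
  Averaging over \<open>D False\<close> and \<open>D True\<close> and regrouping along the root-to-leaf paths of the trees,
  each path with conjunction C and answer w contributes \<open>\<epsilon> C(D w) - (1 - \<epsilon>) C(D (\<not> w))\<close>.
  If no path conjunction satisfied the conclusion for either z, all these contributions would be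
  nonpositive, and the path taken by any input in the support of \<open>D False\<close> would contribute a
  negative one. A path has width at most d; it is padded to width exactly d by splitting on a
  fresh variable, since one of the two halves still satisfies the conclusion.
\<close>

lemma conj_eval_empty [simp]: "conj_eval {} x"
  by (simp add: conj_eval_def)

lemma conj_eval_insert [simp]: "conj_eval (insert (i, b) L) x \<longleftrightarrow> x ! i = b \<and> conj_eval L x"
  by (auto simp: conj_eval_def)

lemma conj_prob_nonneg: "0 \<le> conj_prob L M"
  by (simp add: conj_prob_def)

lemma conj_prob_split:
  "conj_prob L M = conj_prob (insert (i, True) L) M + conj_prob (insert (i, False) L) M"
proof -
  have "measure_pmf.prob M {x. conj_eval L x}
      = measure_pmf.prob M ({x. x ! i \<and> conj_eval L x} \<union> {x. \<not> x ! i \<and> conj_eval L x})"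
    by (rule arg_cong) auto
  also have "\<dots> = measure_pmf.prob M {x. x ! i \<and> conj_eval L x} + measure_pmf.prob M {x. \<not> x ! i \<and> conj_eval L x}"
    by (rule measure_pmf.finite_measure_Union) auto
  finally show ?thesis
    by (simp add: conj_prob_def)
qed

lemma finite_conjunction: "is_conjunction k L \<Longrightarrow> finite L"
  unfolding is_conjunction_def by (rule finite_subset) auto

lemma card_fst_satisfiable:
  assumes "conj_eval L x"
  shows "card (fst ` L) = card L"
proof (rule card_image, rule inj_onI)
  fix p q assume "p \<in> L" "q \<in> L" "fst p = fst q"
  with assms show "p = q"
    unfolding conj_eval_def by (cases p, cases q) fastforce
qed

definition favours :: "real \<Rightarrow> (bool \<Rightarrow> bool list pmf) \<Rightarrow> bool \<Rightarrow> (nat \<times> bool) set \<Rightarrow> bool" where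
  "favours \<epsilon> D z L \<longleftrightarrow>
     0 < conj_prob L (D z) \<and> (1 - \<epsilon>) * conj_prob L (D (\<not> z)) \<le> \<epsilon> * conj_prob L (D z)"

lemma favours_satisfiable:
  assumes "favours \<epsilon> D z L"
  obtains x where "conj_eval L x"
proof -
  have "{x. conj_eval L x} \<noteq> {}"
    using assms unfolding favours_def conj_prob_def by (metis measure_empty less_irrefl)
  then show ?thesis
    using that by blast
qed

lemma favours_split:
  assumes "favours \<epsilon> D z L" and "\<epsilon> \<le> 1"
  shows "favours \<epsilon> D z (insert (i, True) L) \<or> favours \<epsilon> D z (insert (i, False) L)"
proof (rule ccontr)
  define a1 a2 b1 b2 where
    "a1 = conj_prob (insert (i, True) L) (D z)" and "a2 = conj_prob (insert (i, False) L) (D z)" and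
    "b1 = conj_prob (insert (i, True) L) (D (\<not> z))" and "b2 = conj_prob (insert (i, False) L) (D (\<not> z))"
  assume "\<not> ?thesis"
  then have "a1 \<le> 0 \<or> \<epsilon> * a1 < (1 - \<epsilon>) * b1" and "a2 \<le> 0 \<or> \<epsilon> * a2 < (1 - \<epsilon>) * b2"
    by (auto simp: favours_def a1_def a2_def b1_def b2_def not_le)
  moreover have "0 \<le> a1" "0 \<le> a2" "0 \<le> (1 - \<epsilon>) * b1" "0 \<le> (1 - \<epsilon>) * b2"
    using \<open>\<epsilon> \<le> 1\<close> by (simp_all add: a1_def a2_def b1_def b2_def conj_prob_nonneg)
  moreover have "0 < a1 + a2" and "(1 - \<epsilon>) * (b1 + b2) \<le> \<epsilon> * (a1 + a2)"
    using assms(1) conj_prob_split[of L _ i]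
    by (simp_all add: favours_def a1_def a2_def b1_def b2_def)
  ultimately show False
    by (auto simp: algebra_simps)
qed

lemma favours_extend:
  assumes "favours \<epsilon> D z L" "is_conjunction k L" "card L < k" "\<epsilon> \<le> 1"
  obtains L' where "is_conjunction k L'" "card L' = Suc (card L)" "favours \<epsilon> D z L'"
proof -
  obtain x where "conj_eval L x"
    using assms(1) by (rule favours_satisfiable)
  then have "fst ` L \<noteq> {..<k}"
    using assms(3) card_fst_satisfiable[of L x] by auto
  moreover have "fst ` L \<subseteq> {..<k}"
    using assms(2) by (auto simp: is_conjunction_def)
  ultimately obtain i where "i < k" "i \<notin> fst ` L"
    by blast
  then have "(i, b) \<notin> L" for b
    by force
  moreover obtain b where "favours \<epsilon> D z (insert (i, b) L)"
    using favours_split[OF assms(1,4), of i] by blast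
  ultimately show ?thesis
    using that[of "insert (i, b) L"] assms(2) \<open>i < k\<close> finite_conjunction[OF assms(2)]
    by (simp add: is_conjunction_def)
qed

lemma favours_pad:
  assumes "favours \<epsilon> D z L" "is_conjunction k L" "card L \<le> d" "d \<le> k" "\<epsilon> \<le> 1"
  shows "\<exists>L'. is_conjunction k L' \<and> card L' = d \<and> favours \<epsilon> D z L'"
  using assms(3,4)
proof (induction d)
  case 0
  then show ?case
    using assms(1,2) by auto
next
  case (Suc d)
  show ?case
  proof (cases "card L = Suc d")
    case True
    then show ?thesis
      using assms(1,2) by blast
  next
    case False
    then obtain L'' where "is_conjunction k L''" "card L'' = d" "favours \<epsilon> D z L''"
      using Suc by (metis le_SucE Suc_leD)
    with favours_extend[OF _ _ _ assms(5)] show ?thesis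
      using Suc.prems(2) by (metis Suc_le_lessD)
  qed
qed

fun paths :: "dtree \<Rightarrow> ((nat \<times> bool) set \<times> bool option) list" where
  "paths (Leaf v) = [({}, v)]"
| "paths (Node i l r) =
     map (\<lambda>(L, v). (insert (i, False) L, v)) (paths l) @ map (\<lambda>(L, v). (insert (i, True) L, v)) (paths r)"

lemma eval_tree_path_sum:
  fixes f :: "bool option \<Rightarrow> 'a::semiring_1"
  shows "f (eval_tree T x) = (\<Sum>p\<leftarrow>paths T. f (snd p) * of_bool (conj_eval (fst p) x))"
  by (induction T) (auto simp: o_def case_prod_beta)

lemma eval_tree_path: "\<exists>L. (L, eval_tree T x) \<in> set (paths T) \<and> conj_eval L x"
proof (induction T)
  case (Node i l r)
  then obtain Ll Lr where
    "(Ll, eval_tree l x) \<in> set (paths l)" "conj_eval Ll x" and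
    "(Lr, eval_tree r x) \<in> set (paths r)" "conj_eval Lr x"
    by blast
  then show ?case
    by (cases "x ! i") force+
qed simp

lemma card_path_le_depth: "(L, v) \<in> set (paths T) \<Longrightarrow> card L \<le> depth T"
proof (induction T arbitrary: L)
  case (Node i l r)
  then show ?case
    by (fastforce intro: card_insert_le_m1)
qed simp

lemma path_is_conjunction: "valid_tree k T \<Longrightarrow> (L, v) \<in> set (paths T) \<Longrightarrow> is_conjunction k L"
  by (induction T arbitrary: L) (auto simp: is_conjunction_def)

lemma finite_valid_trees: "finite {T. valid_tree k T \<and> depth T \<le> n}"
proof (induction n)
  case 0
  have "{T. valid_tree k T \<and> depth T \<le> 0} \<subseteq> range Leaf"
    by (auto elim: depth.elims)
  then show ?case
    by (rule finite_subset) simp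
next
  case (Suc n)
  let ?S = "{T. valid_tree k T \<and> depth T \<le> n}"
  have "{T. valid_tree k T \<and> depth T \<le> Suc n} \<subseteq>
      range Leaf \<union> (\<lambda>(i, l, r). Node i l r) ` ({..<k} \<times> ?S \<times> ?S)"
  proof
    fix T assume "T \<in> {T. valid_tree k T \<and> depth T \<le> Suc n}"
    then show "T \<in> range Leaf \<union> (\<lambda>(i, l, r). Node i l r) ` ({..<k} \<times> ?S \<times> ?S)"
      by (cases T) force+
  qed
  then show ?case
    by (rule finite_subset) (use Suc in auto)
qed

lemma finite_set_pmf_rdt: "rdt_cost_le k d R \<Longrightarrow> finite (set_pmf R)"
  unfolding rdt_cost_le_def by (rule finite_subset[OF _ finite_valid_trees]) auto

lemma finite_domain_partial_boolfun: "partial_boolfun k h \<Longrightarrow> finite {x. h x = Some z}"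
  unfolding partial_boolfun_def
  by (rule finite_subset[OF _ finite_lists_length_eq[of "UNIV :: bool set" k]]) auto

fun truth_table_tree :: "(bool list \<Rightarrow> bool option) \<Rightarrow> bool list \<Rightarrow> nat \<Rightarrow> dtree" where
  "truth_table_tree h xs 0 = Leaf (h xs)"
| "truth_table_tree h xs (Suc n) =
     Node (length xs) (truth_table_tree h (xs @ [False]) n) (truth_table_tree h (xs @ [True]) n)"

lemma eval_truth_table_tree:
  "length x = length xs + n \<Longrightarrow> take (length xs) x = xs \<Longrightarrow> eval_tree (truth_table_tree h xs n) x = h x"
proof (induction n arbitrary: xs)
  case (Suc n)
  then have "take (Suc (length xs)) x = xs @ [x ! length xs]"
    by (metis add_Suc_right less_add_Suc1 take_Suc_conv_app_nth)
  then show ?case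
    using Suc by (cases "x ! length xs") auto
qed simp

lemma valid_truth_table_tree: "valid_tree (length xs + n) (truth_table_tree h xs n)"
proof (induction n arbitrary: xs)
  case (Suc n)
  show ?case
    using Suc.IH[of "xs @ [False]"] Suc.IH[of "xs @ [True]"] by simp
qed simp

lemma depth_truth_table_tree: "depth (truth_table_tree h xs n) = n"
  by (induction n arbitrary: xs) auto

lemma PostBPP_witness:
  assumes "partial_boolfun k h" "0 \<le> \<epsilon>"
  shows "PostBPP k \<epsilon> h \<le> k" and "\<exists>R. rdt_cost_le k (PostBPP k \<epsilon> h) R \<and> postbpp_correct \<epsilon> h R"
proof -
  let ?R = "return_pmf (truth_table_tree h [] k)"
  have "eval_tree (truth_table_tree h [] k) x = h x" if "h x \<noteq> None" for x
    using that assms(1) by (simp add: eval_truth_table_tree partial_boolfun_def)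
  then have "postbpp_correct \<epsilon> h ?R"
    using assms(2) by (simp add: postbpp_correct_def indicator_def)
  moreover have "rdt_cost_le k k ?R"
    using valid_truth_table_tree[of "[]" k h] by (simp add: rdt_cost_le_def depth_truth_table_tree)
  ultimately have cost_k: "\<exists>R. rdt_cost_le k k R \<and> postbpp_correct \<epsilon> h R"
    by blast
  then show "PostBPP k \<epsilon> h \<le> k"
    unfolding PostBPP_def by (rule Least_le)
  show "\<exists>R. rdt_cost_le k (PostBPP k \<epsilon> h) R \<and> postbpp_correct \<epsilon> h R"
    unfolding PostBPP_def by (rule LeastI_ex) (use cost_k in blast)
qed

lemma postbpp_correct_bias:
  assumes "postbpp_correct \<epsilon> h R" "h x = Some b"
  shows "(1 - \<epsilon>) * measure_pmf.prob R {T. eval_tree T x = Some (\<not> b)}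
           \<le> \<epsilon> * measure_pmf.prob R {T. eval_tree T x = Some b}"
proof -
  define right wrong answered where
    "right = measure_pmf.prob R {T. eval_tree T x = Some b}" and
    "wrong = measure_pmf.prob R {T. eval_tree T x = Some (\<not> b)}" and
    "answered = measure_pmf.prob R {T. eval_tree T x \<noteq> None}"
  have "measure_pmf.prob R {T. eval_tree T x = None} < 1" and "1 - \<epsilon> \<le> right / answered"
    using assms unfolding postbpp_correct_def right_def answered_def by blast+
  moreover have "answered = 1 - measure_pmf.prob R {T. eval_tree T x = None}"
    using measure_pmf.prob_compl[of "{T. eval_tree T x = None}" R] unfolding answered_def
    by (simp add: Collect_neg_eq Compl_eq_Diff_UNIV del: not_None_eq)
  moreover have "{T. eval_tree T x \<noteq> None} = {T. eval_tree T x = Some b} \<union> {T. eval_tree T x = Some (\<not> b)}"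
    by auto
  then have "answered = right + wrong"
    unfolding answered_def right_def wrong_def by (auto intro: measure_pmf.finite_measure_Union)
  ultimately have "(1 - \<epsilon>) * (right + wrong) \<le> right"
    by (simp add: le_divide_eq)
  then show ?thesis
    unfolding right_def[symmetric] wrong_def[symmetric] by (simp add: algebra_simps)
qed

definition answer_score :: "real \<Rightarrow> bool \<Rightarrow> bool option \<Rightarrow> real" where
  "answer_score \<epsilon> z v = \<epsilon> * of_bool (v = Some z) - (1 - \<epsilon>) * of_bool (v = Some (\<not> z))"

fun path_score :: "real \<Rightarrow> (bool \<Rightarrow> bool list pmf) \<Rightarrow> (nat \<times> bool) set \<times> bool option \<Rightarrow> real" where
  "path_score \<epsilon> D (L, None) = 0"
| "path_score \<epsilon> D (L, Some w) = \<epsilon> * conj_prob L (D w) - (1 - \<epsilon>) * conj_prob L (D (\<not> w))"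

lemma path_score_eq_sum:
  "path_score \<epsilon> D p = (\<Sum>z\<in>UNIV. answer_score \<epsilon> z (snd p) * conj_prob (fst p) (D z))"
proof (cases p)
  case (Pair L v)
  then show ?thesis
    by (cases v) (auto simp: answer_score_def UNIV_bool algebra_simps)
qed

lemma prob_finite_pmf:
  assumes "finite (set_pmf M)"
  shows "measure_pmf.prob M A = (\<Sum>x\<in>set_pmf M. pmf M x * of_bool (x \<in> A))"
proof -
  have "measure_pmf.prob M A = measure_pmf.prob M (A \<inter> set_pmf M)"
    by (simp add: measure_Int_set_pmf)
  also have "\<dots> = sum (pmf M) (A \<inter> set_pmf M)"
    using assms by (simp add: measure_measure_pmf_finite)
  also have "\<dots> = (\<Sum>x\<in>set_pmf M. pmf M x * of_bool (x \<in> A))"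
    using assms by (simp add: sum.inter_restrict[symmetric] Int_commute of_bool_def if_distrib cong: if_cong)
  finally show ?thesis .
qed

lemma expected_answer_score_nonneg:
  assumes "finite (set_pmf R)" "postbpp_correct \<epsilon> h R" "h x = Some z"
  shows "0 \<le> (\<Sum>T\<in>set_pmf R. pmf R T * answer_score \<epsilon> z (eval_tree T x))"
proof -
  have "(\<Sum>T\<in>set_pmf R. pmf R T * answer_score \<epsilon> z (eval_tree T x))
      = \<epsilon> * measure_pmf.prob R {T. eval_tree T x = Some z}
        - (1 - \<epsilon>) * measure_pmf.prob R {T. eval_tree T x = Some (\<not> z)}"
    unfolding prob_finite_pmf[OF assms(1)] answer_score_def
    by (simp add: sum_distrib_left sum_subtractf sum.distrib algebra_simps)
  then show ?thesis
    using postbpp_correct_bias[OF assms(2,3)] by simp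
qed

lemma sum_list_sum_comm: "(\<Sum>p\<leftarrow>ps. \<Sum>i\<in>I. f p i) = (\<Sum>i\<in>I. \<Sum>p\<leftarrow>ps. f p i)"
  by (induction ps) (simp_all add: sum.distrib)

lemma expected_tree_score:
  assumes "\<And>z. finite (set_pmf (D z))"
  shows "(\<Sum>z\<in>UNIV. \<Sum>x\<in>set_pmf (D z). pmf (D z) x * answer_score \<epsilon> z (eval_tree T x))
           = (\<Sum>p\<leftarrow>paths T. path_score \<epsilon> D p)"
proof -
  have "answer_score \<epsilon> z (eval_tree T x)
      = (\<Sum>p\<leftarrow>paths T. answer_score \<epsilon> z (snd p) * of_bool (conj_eval (fst p) x))" for z x
    by (rule eval_tree_path_sum)
  then have "(\<Sum>z\<in>UNIV. \<Sum>x\<in>set_pmf (D z). pmf (D z) x * answer_score \<epsilon> z (eval_tree T x))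
      = (\<Sum>z\<in>UNIV. \<Sum>x\<in>set_pmf (D z). \<Sum>p\<leftarrow>paths T.
           pmf (D z) x * (answer_score \<epsilon> z (snd p) * of_bool (conj_eval (fst p) x)))"
    by (simp add: sum_list_const_mult)
  also have "\<dots> = (\<Sum>p\<leftarrow>paths T. \<Sum>z\<in>UNIV.
           answer_score \<epsilon> z (snd p) * (\<Sum>x\<in>set_pmf (D z). pmf (D z) x * of_bool (conj_eval (fst p) x)))"
    by (simp add: sum_list_sum_comm sum_distrib_left mult_ac)
  also have "\<dots> = (\<Sum>p\<leftarrow>paths T. path_score \<epsilon> D p)"
    by (simp add: path_score_eq_sum conj_prob_def prob_finite_pmf[OF assms])
  finally show ?thesis .
qed

lemma expected_path_score_nonneg:
  assumes "finite (set_pmf R)" "\<And>z. finite (set_pmf (D z))"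
    and "\<And>z. set_pmf (D z) \<subseteq> {x. h x = Some z}" "postbpp_correct \<epsilon> h R"
  shows "0 \<le> (\<Sum>T\<in>set_pmf R. pmf R T * (\<Sum>p\<leftarrow>paths T. path_score \<epsilon> D p))"
proof -
  have "0 \<le> (\<Sum>z\<in>UNIV. \<Sum>x\<in>set_pmf (D z).
              pmf (D z) x * (\<Sum>T\<in>set_pmf R. pmf R T * answer_score \<epsilon> z (eval_tree T x)))"
  proof (rule sum_nonneg, rule sum_nonneg, rule mult_nonneg_nonneg[OF pmf_nonneg])
    fix z x assume "x \<in> set_pmf (D z)"
    with assms(3) have "h x = Some z"
      by blast
    then show "0 \<le> (\<Sum>T\<in>set_pmf R. pmf R T * answer_score \<epsilon> z (eval_tree T x))"
      by (rule expected_answer_score_nonneg[OF assms(1,4)])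
  qed
  also have "\<dots> = (\<Sum>T\<in>set_pmf R. pmf R T * (\<Sum>z\<in>UNIV. \<Sum>x\<in>set_pmf (D z).
              pmf (D z) x * answer_score \<epsilon> z (eval_tree T x)))"
    by (simp add: sum_distrib_left mult_ac sum.swap[where B = "set_pmf R"])
  also have "\<dots> = (\<Sum>T\<in>set_pmf R. pmf R T * (\<Sum>p\<leftarrow>paths T. path_score \<epsilon> D p))"
    by (simp add: expected_tree_score[OF assms(2)])
  finally show ?thesis .
qed

lemma path_score_nonfavouring:
  assumes "\<And>z. \<not> favours \<epsilon> D z L" "0 \<le> \<epsilon>" "\<epsilon> \<le> 1"
  shows "path_score \<epsilon> D (L, v) \<le> 0"
    and "0 < conj_prob L (D z) \<Longrightarrow> v \<noteq> None \<Longrightarrow> path_score \<epsilon> D (L, v) < 0"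
proof -
  have nf: "\<epsilon> * conj_prob L (D w) < (1 - \<epsilon>) * conj_prob L (D (\<not> w))" if "0 < conj_prob L (D w)" for w
    using assms(1)[of w] that by (auto simp: favours_def)
  have neg: "path_score \<epsilon> D (L, Some w) < 0" if "0 < conj_prob L (D w) \<or> 0 < conj_prob L (D (\<not> w))" for w
  proof (cases "0 < conj_prob L (D w)")
    case True
    then show ?thesis
      using nf by simp
  next
    case False
    with that nf[of "\<not> w"] have "\<epsilon> * conj_prob L (D (\<not> w)) < 0"
      using conj_prob_nonneg[of L "D w"] by simp
    moreover have "0 \<le> \<epsilon> * conj_prob L (D (\<not> w))"
      using assms(2) conj_prob_nonneg by simp
    ultimately show ?thesis
      by linarith
  qed
  show "path_score \<epsilon> D (L, v) < 0" if pos: "0 < conj_prob L (D z)" and answered: "v \<noteq> None"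
  proof -
    obtain w where "v = Some w"
      using answered by blast
    moreover have "z = w \<or> z = (\<not> w)"
      by blast
    ultimately show ?thesis
      using neg[of w] pos by auto
  qed
  show "path_score \<epsilon> D (L, v) \<le> 0"
  proof (cases v)
    case (Some w)
    then show ?thesis
      using neg[of w] conj_prob_nonneg[of L "D w"] conj_prob_nonneg[of L "D (\<not> w)"]
      by (cases "0 < conj_prob L (D w) \<or> 0 < conj_prob L (D (\<not> w))") auto
  qed simp
qed

lemma tree_score_nonfavouring:
  assumes "\<And>L v z. (L, v) \<in> set (paths T) \<Longrightarrow> \<not> favours \<epsilon> D z L" "0 \<le> \<epsilon>" "\<epsilon> \<le> 1"
  shows "(\<Sum>p\<leftarrow>paths T. path_score \<epsilon> D p) \<le> 0"
    and "x \<in> set_pmf (D z) \<Longrightarrow> eval_tree T x \<noteq> None \<Longrightarrow> (\<Sum>p\<leftarrow>paths T. path_score \<epsilon> D p) < 0"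
proof -
  have path_nonpos: "path_score \<epsilon> D p \<le> 0" if "p \<in> set (paths T)" for p
  proof (cases p)
    case (Pair L v)
    with that assms(1) have "\<And>z. \<not> favours \<epsilon> D z L"
      by blast
    then show ?thesis
      unfolding Pair by (rule path_score_nonfavouring(1)[OF _ assms(2,3)])
  qed
  then show "(\<Sum>p\<leftarrow>paths T. path_score \<epsilon> D p) \<le> 0"
    by (intro sum_list_nonpos) auto
  assume "x \<in> set_pmf (D z)" and answered: "eval_tree T x \<noteq> None"
  obtain L where L: "(L, eval_tree T x) \<in> set (paths T)" "conj_eval L x"
    using eval_tree_path by blast
  have "0 < conj_prob L (D z)"
    unfolding conj_prob_def using \<open>x \<in> set_pmf (D z)\<close> L(2) by (auto intro: measure_pmf_posI)
  then have "path_score \<epsilon> D (L, eval_tree T x) < 0"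
    using path_score_nonfavouring(2)[OF _ assms(2,3)] assms(1)[OF L(1)] answered by blast
  moreover have "(\<Sum>p\<leftarrow>remove1 (L, eval_tree T x) (paths T). path_score \<epsilon> D p) \<le> 0"
    using path_nonpos by (intro sum_list_nonpos) (auto dest: set_remove1_subset[THEN subsetD])
  ultimately show "(\<Sum>p\<leftarrow>paths T. path_score \<epsilon> D p) < 0"
    using sum_list_map_remove1[OF L(1), of "path_score \<epsilon> D"] by linarith
qed

lemma favouring_path_exists:
  assumes "finite (set_pmf R)" "\<And>z. finite (set_pmf (D z))"
    and "\<And>z. set_pmf (D z) \<subseteq> {x. h x = Some z}" "postbpp_correct \<epsilon> h R"
    and "0 \<le> \<epsilon>" "\<epsilon> \<le> 1"
  shows "\<exists>T\<in>set_pmf R. \<exists>(L, v)\<in>set (paths T). \<exists>z. favours \<epsilon> D z L"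
proof (rule ccontr)
  assume "\<not> ?thesis"
  then have nonfav: "\<And>L v z. (L, v) \<in> set (paths T) \<Longrightarrow> \<not> favours \<epsilon> D z L" if "T \<in> set_pmf R" for T
    using that by blast
  obtain x where x: "x \<in> set_pmf (D False)"
    using set_pmf_not_empty[of "D False"] by blast
  with assms(3) have "h x = Some False"
    by blast
  with assms(4) have "measure_pmf.prob R {T. eval_tree T x = None} \<noteq> 1"
    unfolding postbpp_correct_def by fastforce
  then obtain T0 where T0: "T0 \<in> set_pmf R" "eval_tree T0 x \<noteq> None"
    using measure_pmf.prob_eq_1[of "{T. eval_tree T x = None}" R] by (auto simp: AE_measure_pmf_iff)
  have "\<forall>T\<in>set_pmf R. pmf R T * (\<Sum>p\<leftarrow>paths T. path_score \<epsilon> D p) \<le> 0"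
    using tree_score_nonfavouring(1)[OF nonfav assms(5,6)] by (simp add: mult_nonneg_nonpos)
  moreover have "pmf R T0 * (\<Sum>p\<leftarrow>paths T0. path_score \<epsilon> D p) < 0"
    using tree_score_nonfavouring(2)[OF nonfav[OF T0(1)] assms(5,6) x T0(2)] T0(1)
    by (simp add: mult_pos_neg pmf_positive)
  ultimately have "(\<Sum>T\<in>set_pmf R. pmf R T * (\<Sum>p\<leftarrow>paths T. path_score \<epsilon> D p)) < (\<Sum>T\<in>set_pmf R. 0)"
    using T0(1) by (intro sum_strict_mono_ex1[OF assms(1)]) auto
  with expected_path_score_nonneg[OF assms(1-4)] show False
    by simp
qed

theorem fact2p1:
  fixes k :: nat and h :: "bool list \<Rightarrow> bool option" and D :: "bool \<Rightarrow> bool list pmf"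
    and \<epsilon> :: real
  assumes "partial_boolfun k h"
    and "\<And>z. set_pmf (D z) \<subseteq> {x. h x = Some z}"
    and "0 \<le> \<epsilon>" and "\<epsilon> \<le> 1"
  shows "\<exists>L z. is_conjunction k L \<and> width L = PostBPP k \<epsilon> h \<and>
           \<epsilon> * conj_prob L (D z) \<ge> (1 - \<epsilon>) * conj_prob L (D (\<not> z)) \<and>
           conj_prob L (D z) > 0"
proof -
  let ?d = "PostBPP k \<epsilon> h"
  obtain R where cost: "rdt_cost_le k ?d R" and correct: "postbpp_correct \<epsilon> h R"
    using PostBPP_witness(2)[OF assms(1,3)] by blast
  have "finite (set_pmf (D z))" for z
    using finite_domain_partial_boolfun[OF assms(1)] assms(2) by (rule finite_subset[rotated])
  then obtain T L v z where T: "T \<in> set_pmf R" and path: "(L, v) \<in> set (paths T)"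
    and favours: "favours \<epsilon> D z L"
    using favouring_path_exists[OF finite_set_pmf_rdt[OF cost] _ assms(2) correct assms(3,4)] by blast
  have "valid_tree k T" "depth T \<le> ?d"
    using cost T by (auto simp: rdt_cost_le_def)
  then have "is_conjunction k L" "card L \<le> ?d"
    using path_is_conjunction card_path_le_depth[OF path] path by fastforce+
  then obtain L' where "is_conjunction k L'" "card L' = ?d" "favours \<epsilon> D z L'"
    using favours_pad[OF favours _ _ PostBPP_witness(1)[OF assms(1,3)] assms(4)] by blast
  then show ?thesis
    unfolding favours_def width_def by auto
qed

end
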